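(* Assume that we estimate the Shapley effects with the random-permutation $W$-aggregation procedure, where each $\widehat W_u(m)$ is computed with cost $\kappa N_{|u|}$ as $\widehat W_u(m)=\frac1{N_{|u|}}\sum_{n=1}^{N_{|u|}}\widehat W_u^{(n)}(m)$ with i.i.d. $(\widehat W_u^{(n)}(m))_n$ and with all $(\widehat W_u(m))_{u,m}$ independent, and that the variances $(\mathrm{Var}(\widehat W_u^{(1)}(1)))_{\emptyset\subsetneq u\subsetneq[1:p]}$ are all equal. Then the solution of $$\min_{(N_k)_{k\in[1:p-1]}\in(0,+\infty)^{p-1}}\mathrm{E}\Big[\sum_{i=1}^p\mathrm{Var}\big(\widehat\eta_i\,\big|\,(\sigma_m)_{m\in[1:M]}\big)\Big]\quad\text{subject to}\quad\kappa M\sum_{k=1}^{p-1}N_k=\kappa MN_O(p-1)$$ is $N_k^{**}=N_O$ for all $k\in[1:p-1]$.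
   Context: Setting: $\mathbf{X}=(X_1,\dots,X_p)$, $Y=f(\mathbf{X})$, $f\in L^2(\mathbb{P}_\mathbf{X})$; $W_u$ is $V_u=\mathrm{Var}(\mathrm{E}(Y|\mathbf{X}_u))$ or $E_u=\mathrm{E}(\mathrm{Var}(Y|\mathbf{X}_{-u}))$, with $W_\emptyset=0$, $W_{[1:p]}=\mathrm{Var}(Y)$ known. For a permutation $\sigma$ of $[1:p]$ and $i\in[1:p]$, $P_i(\sigma)=\{\sigma(j):j\in[1:\sigma^{-1}(i)-1]\}$. Random-permutation $W$-aggregation procedure: draw $\sigma_1,\dots,\sigma_M$ i.i.d. uniform permutations; for each $m$ and each $u$ of the form $P_{\sigma_m(j)}(\sigma_m)\cup\{\sigma_m(j)\}$ compute one estimate $\widehat W_u(m)$ (used both for the increment of $\sigma_m(j)$ and as the "previous" term for $\sigma_m(j+1)$); then $\widehat\eta_i=\frac{1}{M\mathrm{Var}(Y)}\sum_{m=1}^M(\widehat W_{P_i(\sigma_m)\cup\{i\}}(m)-\widehat W_{P_i(\sigma_m)}(m))$. The accuracy $N_u$ of $\widehat W_u(m)$ is required to depend only on $|u|$, written $N_{|u|}$, and the total cost $\kappa M\sum_{k=1}^{p-1}N_k$ is set to $\kappa MN_O(p-1)$ for a fixed $N_O\in\mathbb{N}^*$. *)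

theory Defs
  imports "HOL-Probability.Probability" "HOL-Combinatorics.Permutations"
begin

definition pred_set :: "(nat \<Rightarrow> nat) \<Rightarrow> nat \<Rightarrow> nat set" where
  "pred_set \<sigma> i = \<sigma> ` {1..< inv \<sigma> i}"

text \<open>Variance of the estimate hat W_u(m) = (1/N_|u|) sum of N_|u| i.i.d. copies of variance v:
  it is v / N_|u| for proper nonempty u, and 0 for u = {} and u = [1:p] (known values).\<close>
definition var_W :: "nat \<Rightarrow> real \<Rightarrow> (nat \<Rightarrow> real) \<Rightarrow> nat set \<Rightarrow> real" where
  "var_W p v N u = (if u = {} \<or> u = {1..p} then 0 else v / N (card u))"

text \<open>Var(hat eta_i | (sigma_m)_m): given the permutations, hat eta_i is
  (1/(M Var Y)) sum_m (hat W_{P u {i}}(m) - hat W_P(m)), all estimates independent.\<close>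
definition cond_var_eta ::
  "nat \<Rightarrow> nat \<Rightarrow> real \<Rightarrow> real \<Rightarrow> (nat \<Rightarrow> real) \<Rightarrow> (nat \<Rightarrow> nat \<Rightarrow> nat) \<Rightarrow> nat \<Rightarrow> real" where
  "cond_var_eta p M VarY v N \<sigma>s i =
     (1 / (real M * VarY))\<^sup>2 *
     (\<Sum>m\<in>{1..M}. var_W p v N (pred_set (\<sigma>s m) i \<union> {i}) + var_W p v N (pred_set (\<sigma>s m) i))"

definition perm_tuples :: "nat \<Rightarrow> nat \<Rightarrow> (nat \<Rightarrow> nat \<Rightarrow> nat) set" where
  "perm_tuples p M = {1..M} \<rightarrow>\<^sub>E {\<sigma>. \<sigma> permutes {1..p}}"

definition shapley_objective :: "nat \<Rightarrow> nat \<Rightarrow> real \<Rightarrow> real \<Rightarrow> (nat \<Rightarrow> real) \<Rightarrow> real" where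
  "shapley_objective p M VarY v N =
     measure_pmf.expectation (pmf_of_set (perm_tuples p M))
       (\<lambda>\<sigma>s. \<Sum>i\<in>{1..p}. cond_var_eta p M VarY v N \<sigma>s i)"

definition feasible_alloc :: "nat \<Rightarrow> nat \<Rightarrow> real \<Rightarrow> nat \<Rightarrow> (nat \<Rightarrow> real) \<Rightarrow> bool" where
  "feasible_alloc p M \<kappa> N\<^sub>O N \<longleftrightarrow>
     (\<forall>k\<in>{1..p-1}. N k > 0) \<and>
     \<kappa> * real M * (\<Sum>k\<in>{1..p-1}. N k) = \<kappa> * real M * real N\<^sub>O * real (p - 1)"

end

theory Submission
  imports Defs
begin

text \<open>Along a permutation \<sigma>, the sets P_i(\<sigma>) \<union> {i} and P_i(\<sigma>) run through the chain of
  initial segments of \<sigma>, which has exactly one set of each size 0, ..., p. As the variance of an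
  estimate of W_u only depends on |u| (and vanishes for the known values u = \<emptyset> and u = [1:p]),
  the conditional variance summed over i is the same for every permutation, namely proportional
  to \<Sum>k. 1 / N_k. Under the budget \<Sum>k. N_k = N_O (p - 1), the tangent-line bound
  1/x \<ge> 2/N_O - x/N_O^2 for the convex function 1/x shows that this is minimal exactly at
  N_k = N_O.\<close>

lemma pred_set_eq_image:
  assumes "\<sigma> permutes {1..p}" and "i \<in> {1..p}"
  shows "pred_set \<sigma> i = \<sigma> ` {1..<inv \<sigma> i}"
    and "pred_set \<sigma> i \<union> {i} = \<sigma> ` {1..inv \<sigma> i}"
    and "inv \<sigma> i \<in> {1..p}"
proof -
  show "pred_set \<sigma> i = \<sigma> ` {1..<inv \<sigma> i}"
    unfolding pred_set_def ..
  show inv_in: "inv \<sigma> i \<in> {1..p}"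
    using permutes_in_image[OF permutes_inv[OF assms(1)]] assms(2) by simp
  then have "{1..inv \<sigma> i} = insert (inv \<sigma> i) {1..<inv \<sigma> i}"
    by auto
  then have "\<sigma> ` {1..inv \<sigma> i} = insert (\<sigma> (inv \<sigma> i)) (\<sigma> ` {1..<inv \<sigma> i})"
    by simp
  then show "pred_set \<sigma> i \<union> {i} = \<sigma> ` {1..inv \<sigma> i}"
    unfolding pred_set_def permutes_inverses(1)[OF assms(1)] by simp
qed

definition var_of_size :: "nat \<Rightarrow> real \<Rightarrow> (nat \<Rightarrow> real) \<Rightarrow> nat \<Rightarrow> real" where
  "var_of_size p v N k = (if k = 0 \<or> k = p then 0 else v / N k)"

lemma var_W_eq_var_of_size:
  assumes "S \<subseteq> {1..p}"
  shows "var_W p v N S = var_of_size p v N (card S)"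
proof -
  have "finite S"
    using assms finite_subset by blast
  then have "S = {} \<longleftrightarrow> card S = 0"
    by simp
  moreover have "S = {1..p} \<longleftrightarrow> card S = p"
    using assms card_subset_eq[of "{1..p}" S] by auto
  ultimately show ?thesis
    unfolding var_W_def var_of_size_def by simp
qed

lemma sum_var_W_along_permutation:
  assumes "\<sigma> permutes {1..p}"
  shows "(\<Sum>i\<in>{1..p}. var_W p v N (pred_set \<sigma> i \<union> {i}) + var_W p v N (pred_set \<sigma> i))
       = (\<Sum>j\<in>{1..p}. var_of_size p v N j + var_of_size p v N (j - 1))"
proof -
  have inj: "inj \<sigma>"
    using assms permutes_inj by blast
  have "var_W p v N (pred_set \<sigma> i \<union> {i}) + var_W p v N (pred_set \<sigma> i)
      = var_of_size p v N (inv \<sigma> i) + var_of_size p v N (inv \<sigma> i - 1)"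
    if i: "i \<in> {1..p}" for i
  proof -
    note image = pred_set_eq_image[OF assms i]
    have "\<sigma> ` {1..inv \<sigma> i} \<subseteq> {1..p}" "\<sigma> ` {1..<inv \<sigma> i} \<subseteq> {1..p}"
      using image(3) permutes_image[OF assms] by auto
    moreover have "card (\<sigma> ` {1..inv \<sigma> i}) = inv \<sigma> i" "card (\<sigma> ` {1..<inv \<sigma> i}) = inv \<sigma> i - 1"
      using card_image[OF inj_on_subset[OF inj]] by simp_all
    ultimately show ?thesis
      by (simp only: image(2) flip: image(1)) (simp add: var_W_eq_var_of_size image(1))
  qed
  then have "(\<Sum>i\<in>{1..p}. var_W p v N (pred_set \<sigma> i \<union> {i}) + var_W p v N (pred_set \<sigma> i))
      = (\<Sum>i\<in>{1..p}. var_of_size p v N (inv \<sigma> i) + var_of_size p v N (inv \<sigma> i - 1))"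
    by (rule sum.cong[OF refl])
  also have "\<dots> = (\<Sum>j\<in>{1..p}. var_of_size p v N j + var_of_size p v N (j - 1))"
    using sum.permute[OF permutes_inv[OF assms], symmetric] by (simp add: comp_def)
  finally show ?thesis .
qed

lemma sum_shift_eq_if_ends_eq:
  fixes f :: "nat \<Rightarrow> 'a::ab_group_add"
  assumes "f 0 = f p"
  shows "(\<Sum>j\<in>{1..p}. f (j - 1)) = (\<Sum>j\<in>{1..p}. f j)"
proof (cases p)
  case (Suc q)
  have "(\<Sum>j\<in>{1..p}. f j) - (\<Sum>j\<in>{1..p}. f (j - 1)) = (\<Sum>i\<in>{0..q}. f (Suc i) - f i)"
    unfolding Suc One_nat_def sum.shift_bounds_cl_Suc_ivl by (simp add: sum_subtractf del: sum.cl_ivl_Suc)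
  also have "\<dots> = 0"
    using assms Suc by (simp add: sum_Suc_diff)
  finally show ?thesis
    by simp
qed simp

lemma sum_var_of_size_chain:
  "(\<Sum>j\<in>{1..p}. var_of_size p v N j + var_of_size p v N (j - 1)) = 2 * (\<Sum>k\<in>{1..p-1}. v / N k)"
proof -
  have "(\<Sum>j\<in>{1..p}. var_of_size p v N j) = (\<Sum>k\<in>{1..p-1}. v / N k)"
  proof (cases p)
    case (Suc q)
    then have "(\<Sum>j\<in>{1..p}. var_of_size p v N j) = (\<Sum>k\<in>{1..q}. var_of_size p v N k)"
      by (simp add: var_of_size_def)
    also have "\<dots> = (\<Sum>k\<in>{1..p-1}. v / N k)"
      using Suc by (intro sum.cong) (auto simp: var_of_size_def)
    finally show ?thesis .
  qed simp
  moreover have "(\<Sum>j\<in>{1..p}. var_of_size p v N (j - 1)) = (\<Sum>j\<in>{1..p}. var_of_size p v N j)"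
    by (rule sum_shift_eq_if_ends_eq) (simp add: var_of_size_def)
  ultimately show ?thesis
    by (simp add: sum.distrib)
qed

lemma shapley_objective_eq:
  "shapley_objective p M VarY v N = 2 * v / (real M * VarY\<^sup>2) * (\<Sum>k\<in>{1..p-1}. 1 / N k)"
proof -
  let ?S = "perm_tuples p M"
  have "finite ?S"
    unfolding perm_tuples_def by (intro finite_PiE) (auto intro: finite_permutations)
  moreover have "(\<lambda>m\<in>{1..M}. id) \<in> ?S"
    unfolding perm_tuples_def using permutes_id by auto
  then have "?S \<noteq> {}"
    by blast
  moreover have "(\<Sum>i\<in>{1..p}. cond_var_eta p M VarY v N \<sigma>s i)
      = 2 * v / (real M * VarY\<^sup>2) * (\<Sum>k\<in>{1..p-1}. 1 / N k)" if "\<sigma>s \<in> ?S" for \<sigma>s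
  proof -
    have "\<sigma>s m permutes {1..p}" if "m \<in> {1..M}" for m
      using \<open>\<sigma>s \<in> ?S\<close> that unfolding perm_tuples_def by auto
    then have "(\<Sum>m\<in>{1..M}. \<Sum>i\<in>{1..p}.
          var_W p v N (pred_set (\<sigma>s m) i \<union> {i}) + var_W p v N (pred_set (\<sigma>s m) i))
        = (\<Sum>m\<in>{1..M}. 2 * (\<Sum>k\<in>{1..p-1}. v / N k))"
      by (intro sum.cong refl) (simp only: sum_var_W_along_permutation sum_var_of_size_chain)
    then have "(\<Sum>i\<in>{1..p}. cond_var_eta p M VarY v N \<sigma>s i)
        = (1 / (real M * VarY))\<^sup>2 * (\<Sum>m\<in>{1..M}. 2 * (\<Sum>k\<in>{1..p-1}. v / N k))"
      unfolding cond_var_eta_def sum_distrib_left[symmetric] by (subst sum.swap) simp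
    also have "\<dots> = 2 * v / (real M * VarY\<^sup>2) * (\<Sum>k\<in>{1..p-1}. 1 / N k)"
      by (simp add: sum_distrib_left power2_eq_square ac_simps)
    finally show ?thesis .
  qed
  ultimately show ?thesis
    unfolding shapley_objective_def by (simp add: integral_pmf_of_set)
qed

lemma inverse_ge_tangent:
  fixes x a :: real
  assumes "x > 0" and "a > 0"
  shows "2 / a - x / a\<^sup>2 \<le> 1 / x"
    and "1 / x = 2 / a - x / a\<^sup>2 \<Longrightarrow> x = a"
proof -
  have gap: "1 / x - (2 / a - x / a\<^sup>2) = (x - a)\<^sup>2 / (a\<^sup>2 * x)"
    using assms by (simp add: field_simps power2_eq_square)
  moreover have "0 \<le> (x - a)\<^sup>2 / (a\<^sup>2 * x)"
    using assms by simp
  ultimately show "2 / a - x / a\<^sup>2 \<le> 1 / x"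
    by linarith
  show "x = a" if "1 / x = 2 / a - x / a\<^sup>2"
    using gap that assms by simp
qed

lemma sum_inverse_ge_card_div_mean:
  fixes x :: "'a \<Rightarrow> real" and a :: real
  assumes "finite K" and "\<forall>k\<in>K. x k > 0" and "(\<Sum>k\<in>K. x k) = a * card K" and "a > 0"
  shows "card K / a \<le> (\<Sum>k\<in>K. 1 / x k)"
    and "(\<Sum>k\<in>K. 1 / x k) = card K / a \<Longrightarrow> \<forall>k\<in>K. x k = a"
proof -
  let ?gap = "\<lambda>k. 1 / x k - (2 / a - x k / a\<^sup>2)"
  have "(\<Sum>k\<in>K. 2 / a - x k / a\<^sup>2) = card K * (2 / a) - (\<Sum>k\<in>K. x k) / a\<^sup>2"
    by (simp add: sum_subtractf sum_divide_distrib)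
  also have "\<dots> = card K / a"
    using assms(4) unfolding assms(3) by (simp add: field_simps power2_eq_square)
  finally have gap_sum: "(\<Sum>k\<in>K. ?gap k) = (\<Sum>k\<in>K. 1 / x k) - card K / a"
    by (simp add: sum_subtractf)
  have gap_nonneg: "0 \<le> ?gap k" if "k \<in> K" for k
    using inverse_ge_tangent(1)[of "x k" a] assms(2,4) that by simp
  then show "card K / a \<le> (\<Sum>k\<in>K. 1 / x k)"
    using sum_nonneg[of K ?gap] gap_sum by simp
  assume "(\<Sum>k\<in>K. 1 / x k) = card K / a"
  then have "\<forall>k\<in>K. ?gap k = 0"
    using sum_nonneg_eq_0_iff[OF assms(1), of ?gap] gap_nonneg gap_sum by simp
  then show "\<forall>k\<in>K. x k = a"
    using inverse_ge_tangent(2) assms(2,4) by simp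
qed

theorem proposition5:
  fixes p M N\<^sub>O :: nat and \<kappa> VarY v :: real
  assumes "p \<ge> 1" and "M \<ge> 1" and "N\<^sub>O \<ge> 1" and "\<kappa> > 0" and "VarY > 0" and "v > 0"
  shows "feasible_alloc p M \<kappa> N\<^sub>O (\<lambda>k. real N\<^sub>O) \<and>
         (\<forall>N. feasible_alloc p M \<kappa> N\<^sub>O N \<longrightarrow>
              shapley_objective p M VarY v (\<lambda>k. real N\<^sub>O) \<le> shapley_objective p M VarY v N \<and>
              (shapley_objective p M VarY v N = shapley_objective p M VarY v (\<lambda>k. real N\<^sub>O)
                 \<longrightarrow> (\<forall>k\<in>{1..p-1}. N k = real N\<^sub>O)))"
proof (intro conjI allI impI)
  show "feasible_alloc p M \<kappa> N\<^sub>O (\<lambda>k. real N\<^sub>O)"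
    unfolding feasible_alloc_def using assms by simp
next
  fix N assume "feasible_alloc p M \<kappa> N\<^sub>O N"
  then have pos: "\<forall>k\<in>{1..p-1}. N k > 0"
    and budget: "(\<Sum>k\<in>{1..p-1}. N k) = real N\<^sub>O * card {1..p-1}"
    using assms unfolding feasible_alloc_def by (auto simp: mult.assoc)
  note bound = sum_inverse_ge_card_div_mean[OF finite_atLeastAtMost pos budget]
  have scale_pos: "2 * v / (real M * VarY\<^sup>2) > 0"
    using assms by simp
  have sum_const: "(\<Sum>k\<in>{1..p-1}. 1 / real N\<^sub>O) = card {1..p-1} / real N\<^sub>O"
    by simp
  show "shapley_objective p M VarY v (\<lambda>k. real N\<^sub>O) \<le> shapley_objective p M VarY v N"
    unfolding shapley_objective_eq sum_const
    using bound(1) assms scale_pos by (intro mult_left_mono) simp_all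
  assume "shapley_objective p M VarY v N = shapley_objective p M VarY v (\<lambda>k. real N\<^sub>O)"
  then have "(\<Sum>k\<in>{1..p-1}. 1 / N k) = card {1..p-1} / real N\<^sub>O"
    unfolding shapley_objective_eq sum_const using scale_pos by (simp only: mult_left_cancel less_irrefl)
  then show "\<forall>k\<in>{1..p-1}. N k = real N\<^sub>O"
    using bound(2) assms by simp
qed

end
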